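(* The graphs $\mathbf{X}_6$ and $\mathbf{X}_7$ are of finite mutation type, i.e. each of them is mutation-equivalent to only finitely many graphs up to isomorphism.
   Context: A graph here is a finite directed multigraph with no loops and no oriented $2$-cycles (never arrows both from $i$ to $j$ and from $j$ to $i$); multiple arrows in the same direction are allowed. Such graphs correspond to skew-symmetric integer matrices $B=(b_{ij})$, with $b_{ij}>0$ meaning $b_{ij}$ arrows from $j$ to $i$. The mutation $\mu_k\Gamma$ of $\Gamma$ at a vertex $k$ is obtained as follows: for every pair of arrows $i\to k$ and $k\to j$ add a new arrow $i\to j$; then reverse every arrow starting or ending at $k$; then repeatedly delete pairs of opposite arrows $i\to j$, $j\to i$ until no oriented $2$-cycles remain. (Equivalently, $b'_{ij}=-b_{ij}$ if $i=k$ or $j=k$, and $b'_{ij}=b_{ij}+[b_{ik}]_+[b_{kj}]_+-[-b_{ik}]_+[-b_{kj}]_+$ otherwise.) Two graphs are mutation-equivalent if one is obtained from the other by a sequence of mutations and a relabeling of vertices. The mutation class of $\Gamma$ is the set of isomorphism classes of graphs mutation-equivalent to $\Gamma$; $\Gamma$ is of finite mutation type (mutation-finite) if its mutation class is finite. $\mathbf{X}_6$ is the graph with vertices $x,w,y_1,z_1,y_2,z_2$ and arrows: two arrows $y_1\to z_1$, one arrow $z_1\to x$, one arrow $x\to y_1$; two arrows $y_2\to z_2$, one arrow $z_2\to x$, one arrow $x\to y_2$; and one arrow $w\to x$. $\mathbf{X}_7$ is the graph with vertices $x,y_1,z_1,y_2,z_2,y_3,z_3$ and, for each $i=1,2,3$,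 two arrows $y_i\to z_i$, one arrow $z_i\to x$ and one arrow $x\to y_i$ (and no other arrows). *)

theory Defs
  imports Main
begin

text \<open>A graph on the vertex set {0..<n} is encoded by its skew-symmetric exchange matrix
  B :: nat \<Rightarrow> nat \<Rightarrow> int, where B i j > 0 means B i j arrows from j to i.
  Entries with an index outside {0..<n} are 0.\<close>

type_synonym qmat = "nat \<Rightarrow> nat \<Rightarrow> int"

text \<open>Matrix of a graph given by arrow counts A i j = number of arrows i \<rightarrow> j.\<close>
definition mat_of_arrows :: "nat \<Rightarrow> (nat \<Rightarrow> nat \<Rightarrow> nat) \<Rightarrow> qmat" where
  "mat_of_arrows n A = (\<lambda>i j. if i < n \<and> j < n then int (A j i) - int (A i j) else 0)"

definition pos :: "int \<Rightarrow> int" where "pos x = max x 0"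

definition mutate :: "nat \<Rightarrow> nat \<Rightarrow> qmat \<Rightarrow> qmat" where
  "mutate n k B = (\<lambda>i j. if i < n \<and> j < n then
       (if i = k \<or> j = k then - B i j
        else B i j + pos (B i k) * pos (B k j) - pos (- B i k) * pos (- B k j))
     else 0)"

inductive mut_reach :: "nat \<Rightarrow> qmat \<Rightarrow> qmat \<Rightarrow> bool" for n where
  refl: "mut_reach n B B"
| step: "mut_reach n B C \<Longrightarrow> k < n \<Longrightarrow> mut_reach n B (mutate n k C)"

definition iso :: "nat \<Rightarrow> qmat \<Rightarrow> qmat \<Rightarrow> bool" where
  "iso n B C \<longleftrightarrow> (\<exists>\<sigma>. bij_betw \<sigma> {0..<n} {0..<n} \<and>
      (\<forall>i j. C i j = (if i < n \<and> j < n then B (\<sigma> i) (\<sigma> j) else 0)))"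

definition mutation_equivalent :: "nat \<Rightarrow> qmat \<Rightarrow> qmat \<Rightarrow> bool" where
  "mutation_equivalent n B C \<longleftrightarrow> (\<exists>D. mut_reach n B D \<and> iso n D C)"

definition mutation_class :: "nat \<Rightarrow> qmat \<Rightarrow> qmat set set" where
  "mutation_class n B = (\<lambda>C. {D. iso n C D}) ` {C. mutation_equivalent n B C}"

definition mutation_finite :: "nat \<Rightarrow> qmat \<Rightarrow> bool" where
  "mutation_finite n B \<longleftrightarrow> finite (mutation_class n B)"

text \<open>X6: vertices x=0, w=1, y1=2, z1=3, y2=4, z2=5.\<close>
definition X6_arrows :: "nat \<Rightarrow> nat \<Rightarrow> nat" where
  "X6_arrows i j =
     (if (i, j) = (2, 3) then 2 else if (i, j) = (3, 0) then 1 else if (i, j) = (0, 2) then 1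
      else if (i, j) = (4, 5) then 2 else if (i, j) = (5, 0) then 1 else if (i, j) = (0, 4) then 1
      else if (i, j) = (1, 0) then 1 else 0)"

definition X6 :: qmat where "X6 = mat_of_arrows 6 X6_arrows"

text \<open>X7: vertices x=0, y1=1, z1=2, y2=3, z2=4, y3=5, z3=6.\<close>
definition X7_arrows :: "nat \<Rightarrow> nat \<Rightarrow> nat" where
  "X7_arrows i j =
     (if (i, j) \<in> {(1, 2), (3, 4), (5, 6)} then 2
      else if (i, j) \<in> {(2, 0), (4, 0), (6, 0), (0, 1), (0, 3), (0, 5)} then 1
      else 0)"

definition X7 :: qmat where "X7 = mat_of_arrows 7 X7_arrows"

end

theory Submission
  imports Defs "HOL-Library.FuncSet"
begin

text \<open>Mutation commutes with relabeling, so if every mutation of a member of a finite set S of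
  graphs is isomorphic to a member of S, then all graphs mutation-equivalent to a member of S
  are relabelings of members of S, of which there are finitely many. For X6 a set of five graphs
  and for X7 a set of two graphs has this closure property; it is verified by evaluating every
  mutation and comparing it with a relabeled member of the set named by an explicit certificate.\<close>

definition relabel :: "nat \<Rightarrow> (nat \<Rightarrow> nat) \<Rightarrow> qmat \<Rightarrow> qmat" where
  "relabel n \<sigma> B = (\<lambda>i j. if i < n \<and> j < n then B (\<sigma> i) (\<sigma> j) else 0)"

definition relabelings :: "nat \<Rightarrow> qmat set \<Rightarrow> qmat set" where
  "relabelings n S = {relabel n \<sigma> R | \<sigma> R. R \<in> S \<and> bij_betw \<sigma> {0..<n} {0..<n}}"

definition mutation_closed_up_to_iso :: "nat \<Rightarrow> qmat set \<Rightarrow> bool" where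
  "mutation_closed_up_to_iso n S \<longleftrightarrow> (\<forall>R\<in>S. \<forall>k<n. mutate n k R \<in> relabelings n S)"

lemma iso_iff_relabel: "iso n B C \<longleftrightarrow> (\<exists>\<sigma>. bij_betw \<sigma> {0..<n} {0..<n} \<and> C = relabel n \<sigma> B)"
  by (auto simp: iso_def relabel_def fun_eq_iff)

lemma mutate_relabel:
  assumes \<sigma>: "bij_betw \<sigma> {0..<n} {0..<n}" and k: "k < n"
  shows "mutate n k (relabel n \<sigma> B) = relabel n \<sigma> (mutate n (\<sigma> k) B)"
proof -
  have range: "\<And>i. i < n \<Longrightarrow> \<sigma> i < n"
    using \<sigma> by (auto dest: bij_betwE)
  have "\<And>i. i < n \<Longrightarrow> \<sigma> i = \<sigma> k \<longleftrightarrow> i = k"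
    using bij_betw_imp_inj_on[OF \<sigma>] k by (auto simp: inj_on_def)
  then show ?thesis
    by (auto simp: fun_eq_iff mutate_def relabel_def k range)
qed

lemma relabel_relabel:
  assumes "\<And>i. i < n \<Longrightarrow> \<tau> i < n"
  shows "relabel n \<tau> (relabel n \<sigma> B) = relabel n (\<sigma> \<circ> \<tau>) B"
  using assms by (auto simp: fun_eq_iff relabel_def)

lemma relabel_mem_relabelings:
  assumes "C \<in> relabelings n S" and \<tau>: "bij_betw \<tau> {0..<n} {0..<n}"
  shows "relabel n \<tau> C \<in> relabelings n S"
proof -
  obtain \<sigma> R where R: "R \<in> S" and \<sigma>: "bij_betw \<sigma> {0..<n} {0..<n}" and C: "C = relabel n \<sigma> R"
    using assms(1) by (auto simp: relabelings_def)
  have "relabel n \<tau> C = relabel n (\<sigma> \<circ> \<tau>) R"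
    unfolding C by (rule relabel_relabel) (use \<tau> in \<open>auto dest: bij_betwE\<close>)
  then show ?thesis
    using R bij_betw_trans[OF \<tau> \<sigma>] by (auto simp: relabelings_def)
qed

lemma mutate_mem_relabelings:
  assumes closed: "mutation_closed_up_to_iso n S"
    and "C \<in> relabelings n S" and k: "k < n"
  shows "mutate n k C \<in> relabelings n S"
proof -
  obtain \<sigma> R where R: "R \<in> S" and \<sigma>: "bij_betw \<sigma> {0..<n} {0..<n}" and C: "C = relabel n \<sigma> R"
    using assms(2) by (auto simp: relabelings_def)
  have "\<sigma> k < n"
    using \<sigma> k by (auto dest: bij_betwE)
  then have "mutate n (\<sigma> k) R \<in> relabelings n S"
    using closed R by (simp add: mutation_closed_up_to_iso_def)
  then show ?thesis
    unfolding C mutate_relabel[OF \<sigma> k] using \<sigma> by (rule relabel_mem_relabelings)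
qed

lemma mut_reach_relabelings:
  assumes closed: "mutation_closed_up_to_iso n S"
  shows "mut_reach n B D \<Longrightarrow> B \<in> relabelings n S \<Longrightarrow> D \<in> relabelings n S"
  by (induction rule: mut_reach.induct) (auto intro: mutate_mem_relabelings[OF closed])

lemma finite_relabelings:
  assumes "finite S"
  shows "finite (relabelings n S)"
proof -
  have "relabelings n S \<subseteq> (\<lambda>(R, \<sigma>). relabel n \<sigma> R) ` (S \<times> ({0..<n} \<rightarrow>\<^sub>E {0..<n}))"
  proof
    fix C assume "C \<in> relabelings n S"
    then obtain \<sigma> R where R: "R \<in> S" and \<sigma>: "bij_betw \<sigma> {0..<n} {0..<n}" and C: "C = relabel n \<sigma> R"
      by (auto simp: relabelings_def)
    have "C = relabel n (restrict \<sigma> {0..<n}) R"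
      by (auto simp: C relabel_def fun_eq_iff)
    moreover have "restrict \<sigma> {0..<n} \<in> {0..<n} \<rightarrow>\<^sub>E {0..<n}"
      using \<sigma> by (auto dest: bij_betwE)
    ultimately show "C \<in> (\<lambda>(R, \<sigma>). relabel n \<sigma> R) ` (S \<times> ({0..<n} \<rightarrow>\<^sub>E {0..<n}))"
      using R by force
  qed
  then show ?thesis
    by (rule finite_subset) (use assms in \<open>auto intro: finite_PiE\<close>)
qed

lemma mutation_finite_if_closed:
  assumes "mutation_closed_up_to_iso n S" and "finite S" and "B \<in> relabelings n S"
  shows "mutation_finite n B"
proof -
  have "{C. mutation_equivalent n B C} \<subseteq> relabelings n S"
    using assms mut_reach_relabelings relabel_mem_relabelings
    by (fastforce simp: mutation_equivalent_def iso_iff_relabel)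
  then have "finite {C. mutation_equivalent n B C}"
    using finite_relabelings[OF assms(2)] by (rule finite_subset)
  then show ?thesis
    by (simp add: mutation_finite_def mutation_class_def)
qed

definition matrix_of_rows :: "nat \<Rightarrow> int list list \<Rightarrow> qmat" where
  "matrix_of_rows n L = (\<lambda>i j. if i < n \<and> j < n then L ! i ! j else 0)"

definition rows_of_matrix :: "nat \<Rightarrow> qmat \<Rightarrow> int list list" where
  "rows_of_matrix n B = map (\<lambda>i. map (\<lambda>j. B i j) [0..<n]) [0..<n]"

definition vanishes_outside :: "nat \<Rightarrow> qmat \<Rightarrow> bool" where
  "vanishes_outside n B \<longleftrightarrow> (\<forall>i j. \<not> (i < n \<and> j < n) \<longrightarrow> B i j = 0)"

lemma vanishes_outside_mutate: "vanishes_outside n (mutate n k B)"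
  by (simp add: vanishes_outside_def mutate_def)

lemma vanishes_outside_relabel: "vanishes_outside n (relabel n \<sigma> B)"
  by (simp add: vanishes_outside_def relabel_def)

lemma vanishes_outside_matrix_of_rows: "vanishes_outside n (matrix_of_rows n L)"
  by (simp add: vanishes_outside_def matrix_of_rows_def)

lemma vanishes_outside_mat_of_arrows: "vanishes_outside n (mat_of_arrows n A)"
  by (simp add: vanishes_outside_def mat_of_arrows_def)

lemma eq_if_rows_of_matrix_eq:
  assumes "vanishes_outside n B" and "vanishes_outside n C"
    and "rows_of_matrix n B = rows_of_matrix n C"
  shows "B = C"
proof (rule ext, rule ext)
  fix i j
  show "B i j = C i j"
  proof (cases "i < n \<and> j < n")
    case True
    then have "rows_of_matrix n B ! i ! j = rows_of_matrix n C ! i ! j"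
      using assms(3) by simp
    with True show ?thesis
      by (simp add: rows_of_matrix_def)
  qed (use assms(1,2) in \<open>simp add: vanishes_outside_def\<close>)
qed

lemma relabel_id_matrix_of_rows: "relabel n id (matrix_of_rows n L) = matrix_of_rows n L"
  by (auto simp: relabel_def matrix_of_rows_def fun_eq_iff)

definition perm_list :: "nat \<Rightarrow> nat list \<Rightarrow> bool" where
  "perm_list n p \<longleftrightarrow> distinct p \<and> length p = n \<and> list_all (\<lambda>i. i < n) p"

lemma bij_betw_nth_perm_list:
  assumes "perm_list n p"
  shows "bij_betw ((!) p) {0..<n} {0..<n}"
proof -
  have "set p \<subseteq> {0..<n}" and "card (set p) = n"
    using assms by (auto simp: perm_list_def list_all_iff distinct_card)
  then have "set p = {0..<n}"
    by (simp add: card_subset_eq)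
  then show ?thesis
    using assms by (intro bij_betw_nth) (auto simp: perm_list_def)
qed

text \<open>Row r of a certificate C lists, for each vertex k, a pair (r', p) asserting
  that mutating the r-th graph of Ls at k gives the r'-th graph of Ls relabeled by p.\<close>

definition mutation_certificate :: "nat \<Rightarrow> int list list list \<Rightarrow> (nat \<times> nat list) list list \<Rightarrow> bool" where
  "mutation_certificate n Ls C \<longleftrightarrow>
     list_all2 (\<lambda>L row. list_all2 (\<lambda>k (r', p). r' < length Ls \<and> perm_list n p \<and>
         rows_of_matrix n (mutate n k (matrix_of_rows n L)) =
         rows_of_matrix n (relabel n ((!) p) (matrix_of_rows n (Ls ! r')))) [0..<n] row) Ls C"

lemma mutation_closed_if_certificate:
  assumes cert: "mutation_certificate n Ls C"
  shows "mutation_closed_up_to_iso n (matrix_of_rows n ` set Ls)"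
  unfolding mutation_closed_up_to_iso_def
proof (intro ballI allI impI)
  fix R k assume "R \<in> matrix_of_rows n ` set Ls" and k: "k < n"
  then obtain r where r: "r < length Ls" and R: "R = matrix_of_rows n (Ls ! r)"
    by (auto simp: in_set_conv_nth)
  obtain r' p where step: "C ! r ! k = (r', p)"
    by fastforce
  have "list_all2 (\<lambda>k (r', p). r' < length Ls \<and> perm_list n p \<and>
      rows_of_matrix n (mutate n k (matrix_of_rows n (Ls ! r))) =
      rows_of_matrix n (relabel n ((!) p) (matrix_of_rows n (Ls ! r')))) [0..<n] (C ! r)"
    using list_all2_nthD[OF cert[unfolded mutation_certificate_def] r] .
  then have "case C ! r ! k of (r', p) \<Rightarrow> r' < length Ls \<and> perm_list n p \<and>
      rows_of_matrix n (mutate n k R) =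
      rows_of_matrix n (relabel n ((!) p) (matrix_of_rows n (Ls ! r')))"
    using list_all2_nthD[of _ "[0..<n]" "C ! r" k] k by (simp add: R)
  then have r': "r' < length Ls" and p: "perm_list n p"
    and rows: "rows_of_matrix n (mutate n k R) =
      rows_of_matrix n (relabel n ((!) p) (matrix_of_rows n (Ls ! r')))"
    by (simp_all add: step)
  have "mutate n k R = relabel n ((!) p) (matrix_of_rows n (Ls ! r'))"
    using vanishes_outside_mutate vanishes_outside_relabel rows by (rule eq_if_rows_of_matrix_eq)
  then show "mutate n k R \<in> relabelings n (matrix_of_rows n ` set Ls)"
    unfolding relabelings_def using bij_betw_nth_perm_list[OF p] nth_mem[OF r'] by blast
qed

lemma mutation_finite_by_certificate:
  assumes "mutation_certificate n Ls C" and "Ls \<noteq> []"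
  shows "mutation_finite n (matrix_of_rows n (hd Ls))"
proof (rule mutation_finite_if_closed[OF mutation_closed_if_certificate[OF assms(1)]])
  show "matrix_of_rows n (hd Ls) \<in> relabelings n (matrix_of_rows n ` set Ls)"
    unfolding relabelings_def using assms(2)
    by (auto intro!: exI[of _ id] exI[of _ "matrix_of_rows n (hd Ls)"] simp: relabel_id_matrix_of_rows)
qed simp

definition X6_class_rows :: "int list list list" where
  "X6_class_rows =
    [[[ 0, 1,-1, 1,-1, 1], [-1, 0, 0, 0, 0, 0], [ 1, 0, 0,-2, 0, 0],
      [-1, 0, 2, 0, 0, 0], [ 1, 0, 0, 0, 0,-2], [-1, 0, 0, 0, 2, 0]],
     [[ 0,-1, 1,-1, 1,-1], [ 1, 0,-1, 0,-1, 0], [-1, 1, 0,-1, 0, 1],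
      [ 1, 0, 1, 0,-1, 0], [-1, 1, 0, 1, 0,-1], [ 1, 0,-1, 0, 1, 0]],
     [[ 0,-1,-1, 1,-1, 1], [ 1, 0, 0, 0, 0, 0], [ 1, 0, 0,-2, 0, 0],
      [-1, 0, 2, 0, 0, 0], [ 1, 0, 0, 0, 0,-2], [-1, 0, 0, 0, 2, 0]],
     [[ 0, 1, 0,-1, 0,-1], [-1, 0, 1, 0, 1, 0], [ 0,-1, 0,-1, 0, 1],
      [ 1, 0, 1, 0,-1, 0], [ 0,-1, 0, 1, 0,-1], [ 1, 0,-1, 0, 1, 0]],
     [[ 0, 0,-1,-1, 1, 0], [ 0, 0, 1,-1,-1, 0], [ 1,-1, 0, 1, 0,-1],
      [ 1, 1,-1, 0,-1, 1], [-1, 1, 0, 1, 0,-1], [ 0, 0, 1,-1, 1, 0]]]"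

definition X6_certificate :: "(nat \<times> nat list) list list" where
  "X6_certificate =
    [[(1, [0,1,2,3,4,5]), (2, [0,1,2,3,4,5]), (0, [0,1,3,2,4,5]),
      (0, [0,1,3,2,4,5]), (0, [0,1,2,3,5,4]), (0, [0,1,2,3,5,4])],
     [(0, [0,1,2,3,4,5]), (3, [0,1,2,3,4,5]), (4, [0,1,2,3,4,5]),
      (4, [2,1,3,0,4,5]), (4, [0,1,4,5,2,3]), (4, [2,1,4,5,3,0])],
     [(4, [3,5,0,2,1,4]), (0, [0,1,2,3,4,5]), (2, [0,1,3,2,4,5]),
      (2, [0,1,3,2,4,5]), (2, [0,1,2,3,5,4]), (2, [0,1,2,3,5,4])],
     [(4, [5,3,0,2,1,4]), (1, [0,1,2,3,4,5]), (4, [0,4,5,2,1,3]),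
      (1, [2,5,4,1,0,3]), (4, [0,4,1,3,5,2]), (1, [2,5,0,3,4,1])],
     [(1, [3,1,0,2,4,5]), (1, [1,3,4,2,0,5]), (1, [0,1,2,3,4,5]),
      (2, [2,4,3,0,5,1]), (1, [1,0,2,5,4,3]), (3, [0,2,5,3,1,4])]]"

definition X7_class_rows :: "int list list list" where
  "X7_class_rows =
    [[[ 0,-1, 1,-1, 1,-1, 1], [ 1, 0,-2, 0, 0, 0, 0], [-1, 2, 0, 0, 0, 0, 0],
      [ 1, 0, 0, 0,-2, 0, 0], [-1, 0, 0, 2, 0, 0, 0], [ 1, 0, 0, 0, 0, 0,-2],
      [-1, 0, 0, 0, 0, 2, 0]],
     [[ 0, 1,-1, 1,-1, 1,-1], [-1, 0,-1, 0, 1, 0, 1], [ 1, 1, 0,-1, 0,-1, 0],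
      [-1, 0, 1, 0,-1, 0, 1], [ 1,-1, 0, 1, 0,-1, 0], [-1, 0, 1, 0, 1, 0,-1],
      [ 1,-1, 0,-1, 0, 1, 0]]]"

definition X7_certificate :: "(nat \<times> nat list) list list" where
  "X7_certificate =
    [[(1, [0,1,2,3,4,5,6]), (0, [0,2,1,3,4,5,6]), (0, [0,2,1,3,4,5,6]), (0, [0,1,2,4,3,5,6]),
      (0, [0,1,2,4,3,5,6]), (0, [0,1,2,3,4,6,5]), (0, [0,1,2,3,4,6,5])],
     [(0, [0,1,2,3,4,5,6]), (1, [1,2,0,4,5,6,3]), (1, [2,0,1,4,5,6,3]), (1, [1,4,5,2,0,6,3]),
      (1, [2,4,5,0,1,6,3]), (1, [1,4,5,6,3,2,0]), (1, [2,4,5,6,3,0,1])]]"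

lemma X6_eq_matrix_of_rows: "X6 = matrix_of_rows 6 (hd X6_class_rows)"
  by (rule eq_if_rows_of_matrix_eq[OF vanishes_outside_mat_of_arrows[of 6 X6_arrows, folded X6_def]
      vanishes_outside_matrix_of_rows]) code_simp

lemma X7_eq_matrix_of_rows: "X7 = matrix_of_rows 7 (hd X7_class_rows)"
  by (rule eq_if_rows_of_matrix_eq[OF vanishes_outside_mat_of_arrows[of 7 X7_arrows, folded X7_def]
      vanishes_outside_matrix_of_rows]) code_simp

lemma X6_certificate_valid: "mutation_certificate 6 X6_class_rows X6_certificate"
  by code_simp

lemma X7_certificate_valid: "mutation_certificate 7 X7_class_rows X7_certificate"
  by code_simp

theorem mainTheorem1:
  shows "mutation_finite 6 X6 \<and> mutation_finite 7 X7"
proof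
  show "mutation_finite 6 X6"
    unfolding X6_eq_matrix_of_rows
    by (rule mutation_finite_by_certificate[OF X6_certificate_valid]) (simp add: X6_class_rows_def)
  show "mutation_finite 7 X7"
    unfolding X7_eq_matrix_of_rows
    by (rule mutation_finite_by_certificate[OF X7_certificate_valid]) (simp add: X7_class_rows_def)
qed

end
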